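(* Let $H$ be a connected graph and let $G=KB(H)$ be its biclique graph. Let $b_1,b_2$ be false-twin vertices of $G$ (i.e. $b_1\neq b_2$ and $N_G(b_1)=N_G(b_2)$), and let $B_1,B_2$ be the bicliques of $H$ corresponding to $b_1,b_2$. Suppose that there is no edge of $H$ between a vertex of $B_1$ and a vertex of $B_2$. Then there exists a vertex $v\in V(H)$ that is adjacent to every vertex of $B_1$ and to every vertex of $B_2$. Furthermore, $G$ contains $K_5$ as an induced subgraph.
   Context: All graphs are finite, simple, undirected and connected. A biclique of a graph $H$ is a maximal (under inclusion of vertex sets) induced complete bipartite subgraph of $H$ with both sides nonempty. The biclique graph $KB(H)$ is the intersection graph of the bicliques of $H$: its vertices are the bicliques of $H$, and two distinct bicliques are adjacent iff they share at least one vertex. $N(u)$ denotes the open neighborhood of $u$; two vertices $u,w$ are false twins if $N(u)=N(w)$. *)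

theory Defs
  imports Main
begin

definition simple_graph :: "'a set \<Rightarrow> ('a \<Rightarrow> 'a \<Rightarrow> bool) \<Rightarrow> bool" where
  "simple_graph V E \<longleftrightarrow> finite V \<and> V \<noteq> {} \<and>
     (\<forall>x y. E x y \<longrightarrow> x \<in> V \<and> y \<in> V) \<and>
     (\<forall>x y. E x y \<longrightarrow> E y x) \<and> (\<forall>x. \<not> E x x)"

definition connected_graph :: "'a set \<Rightarrow> ('a \<Rightarrow> 'a \<Rightarrow> bool) \<Rightarrow> bool" where
  "connected_graph V E \<longleftrightarrow> simple_graph V E \<and>
     (\<forall>x\<in>V. \<forall>y\<in>V. (\<lambda>u w. E u w)\<^sup>*\<^sup>* x y)"

definition induced_complete_bipartite :: "'a set \<Rightarrow> ('a \<Rightarrow> 'a \<Rightarrow> bool) \<Rightarrow> 'a set \<Rightarrow> bool" where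
  "induced_complete_bipartite V E S \<longleftrightarrow> S \<subseteq> V \<and>
     (\<exists>X Y. X \<noteq> {} \<and> Y \<noteq> {} \<and> X \<inter> Y = {} \<and> X \<union> Y = S \<and>
        (\<forall>x\<in>X. \<forall>x'\<in>X. \<not> E x x') \<and> (\<forall>y\<in>Y. \<forall>y'\<in>Y. \<not> E y y') \<and>
        (\<forall>x\<in>X. \<forall>y\<in>Y. E x y))"

text \<open>A biclique (identified with its vertex set, since it is induced):
maximal under inclusion of vertex sets.\<close>
definition biclique :: "'a set \<Rightarrow> ('a \<Rightarrow> 'a \<Rightarrow> bool) \<Rightarrow> 'a set \<Rightarrow> bool" where
  "biclique V E S \<longleftrightarrow> induced_complete_bipartite V E S \<and>
     (\<forall>S'. induced_complete_bipartite V E S' \<and> S \<subseteq> S' \<longrightarrow> S' = S)"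

definition KB_vertices :: "'a set \<Rightarrow> ('a \<Rightarrow> 'a \<Rightarrow> bool) \<Rightarrow> 'a set set" where
  "KB_vertices V E = {S. biclique V E S}"

definition KB_adj :: "'a set \<Rightarrow> ('a \<Rightarrow> 'a \<Rightarrow> bool) \<Rightarrow> 'a set \<Rightarrow> 'a set \<Rightarrow> bool" where
  "KB_adj V E B B' \<longleftrightarrow> B \<in> KB_vertices V E \<and> B' \<in> KB_vertices V E \<and> B \<noteq> B' \<and> B \<inter> B' \<noteq> {}"

definition nbhd :: "('b \<Rightarrow> 'b \<Rightarrow> bool) \<Rightarrow> 'b \<Rightarrow> 'b set" where
  "nbhd E u = {w. E u w}"

definition false_twins :: "('b \<Rightarrow> 'b \<Rightarrow> bool) \<Rightarrow> 'b \<Rightarrow> 'b \<Rightarrow> bool" where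
  "false_twins E u w \<longleftrightarrow> u \<noteq> w \<and> nbhd E u = nbhd E w"

definition has_induced_K :: "nat \<Rightarrow> 'b set \<Rightarrow> ('b \<Rightarrow> 'b \<Rightarrow> bool) \<Rightarrow> bool" where
  "has_induced_K n VG EG \<longleftrightarrow> (\<exists>K. K \<subseteq> VG \<and> finite K \<and> card K = n \<and>
      (\<forall>x\<in>K. \<forall>y\<in>K. x \<noteq> y \<longrightarrow> EG x y))"

end

theory Submission
  imports Defs
begin

text \<open>Take a vertex v outside B1 adjacent to some x \<in> B1 (it exists by connectivity).
If v missed some neighbour u of x in B1, then {x, v, u} would extend to a biclique that meets
B1 but neither equals B1 nor B2, so by the twin property it meets B2 in some y; but y is
adjacent to x or u, contradicting the absence of edges between B1 and B2. Since B1 has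
diameter at most 2, v sees all of B1, and the same argument applied to the biclique through
the edge x v produces a neighbour of v in B2 and then all of B2. Finally, with an edge x1 y1
in B1 and x2 y2 in B2, the four stars centred at v with leaves {x1 or y1, x2 or y2} extend to
four bicliques that are pairwise distinct (a biclique contains no triangle), all contain v,
and all meet B1; together with B1 they form a K5 in KB(H).\<close>

lemma simple_graph_sym: "simple_graph V E \<Longrightarrow> E x y \<Longrightarrow> E y x"
  unfolding simple_graph_def by blast

lemma simple_graph_irrefl: "simple_graph V E \<Longrightarrow> \<not> E x x"
  unfolding simple_graph_def by blast

lemma simple_graph_edge_in_V: "simple_graph V E \<Longrightarrow> E x y \<Longrightarrow> x \<in> V \<and> y \<in> V"
  unfolding simple_graph_def by blast

lemma induced_complete_bipartite_subset:
  "induced_complete_bipartite V E S \<Longrightarrow> S \<subseteq> V"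
  unfolding induced_complete_bipartite_def by blast

lemma induced_complete_bipartite_has_edge:
  "induced_complete_bipartite V E S \<Longrightarrow> \<exists>a\<in>S. \<exists>b\<in>S. E a b"
  unfolding induced_complete_bipartite_def by blast

lemma induced_complete_bipartite_triangle_free:
  assumes "induced_complete_bipartite V E S" "a \<in> S" "b \<in> S" "c \<in> S"
  shows "\<not> (E a b \<and> E b c \<and> E a c)"
  using assms unfolding induced_complete_bipartite_def by blast

lemma induced_complete_bipartite_adj_edge:
  assumes "simple_graph V E" "induced_complete_bipartite V E S"
    and "a \<in> S" "b \<in> S" "c \<in> S" "E a b"
  shows "E a c \<or> E b c"
  using assms simple_graph_sym[OF assms(1)] unfolding induced_complete_bipartite_def by blast

lemma induced_complete_bipartite_dist_le_2:
  assumes "simple_graph V E" "induced_complete_bipartite V E S" "x \<in> S" "w \<in> S"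
  shows "E x w \<or> (\<exists>u\<in>S. E x u \<and> E u w)"
proof -
  obtain X Y where XY: "X \<noteq> {}" "Y \<noteq> {}" "X \<union> Y = S" "\<forall>a\<in>X. \<forall>b\<in>Y. E a b"
    using assms(2) unfolding induced_complete_bipartite_def by blast
  obtain x0 y0 where "x0 \<in> X" "y0 \<in> Y" using XY by blast
  then show ?thesis
    using XY assms(3,4) simple_graph_sym[OF assms(1)] by blast
qed

lemma induced_complete_bipartite_star:
  assumes "simple_graph V E" "A \<noteq> {}" "\<forall>a\<in>A. E c a" "\<forall>a\<in>A. \<forall>b\<in>A. \<not> E a b"
  shows "induced_complete_bipartite V E (insert c A)"
  unfolding induced_complete_bipartite_def
proof (intro conjI exI)
  show "insert c A \<subseteq> V" using assms(2,3) simple_graph_edge_in_V[OF assms(1)] by blast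
  show "{c} \<inter> A = {}" using assms(3) simple_graph_irrefl[OF assms(1)] by blast
qed (use assms simple_graph_irrefl[OF assms(1)] in auto)

lemma induced_complete_bipartite_extends_to_biclique:
  assumes "finite V" "induced_complete_bipartite V E S"
  obtains B where "biclique V E B" "S \<subseteq> B"
proof -
  let ?A = "{S'. induced_complete_bipartite V E S' \<and> S \<subseteq> S'}"
  have "?A \<subseteq> Pow V" using induced_complete_bipartite_subset by blast
  then have "finite ?A" using assms(1) finite_subset by blast
  then obtain B where B: "B \<in> ?A" "\<forall>S'\<in>?A. B \<subseteq> S' \<longrightarrow> B = S'"
    using finite_has_maximal2[of ?A S] assms(2) by blast
  have "biclique V E B"
    unfolding biclique_def
  proof (intro conjI allI impI)
    show "induced_complete_bipartite V E B" using B(1) by blast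
    fix S' assume "induced_complete_bipartite V E S' \<and> B \<subseteq> S'"
    then show "S' = B" using B by (metis (mono_tags, lifting) mem_Collect_eq order_trans)
  qed
  then show ?thesis using that B(1) by blast
qed

lemma star_extends_to_biclique:
  assumes "simple_graph V E" "A \<noteq> {}" "\<forall>a\<in>A. E c a" "\<forall>a\<in>A. \<forall>b\<in>A. \<not> E a b"
  obtains B where "biclique V E B" "insert c A \<subseteq> B"
proof (rule induced_complete_bipartite_extends_to_biclique)
  show "finite V" using assms(1) unfolding simple_graph_def by blast
qed (use induced_complete_bipartite_star[OF assms] that in blast)+

lemma biclique_induced_complete_bipartite:
  "biclique V E S \<Longrightarrow> induced_complete_bipartite V E S"
  by (simp add: biclique_def)

lemma rtranclp_leaves_set:
  assumes "R\<^sup>*\<^sup>* a b" "a \<in> A" "b \<notin> A"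
  obtains x y where "x \<in> A" "y \<notin> A" "R x y"
  using assms by (induction rule: rtranclp_induct) blast+

lemma false_twins_KB_disjoint:
  assumes "false_twins (KB_adj V E) B1 B2" "B1 \<in> KB_vertices V E" "B2 \<in> KB_vertices V E"
  shows "B1 \<inter> B2 = {}"
  using assms unfolding false_twins_def nbhd_def KB_adj_def by blast

lemma false_twins_KB_meet:
  assumes "false_twins (KB_adj V E) B1 B2" "B1 \<in> KB_vertices V E"
    and "biclique V E C" "C \<inter> B1 \<noteq> {}" "C \<noteq> B1" "C \<noteq> B2"
  shows "C \<inter> B2 \<noteq> {}"
proof -
  have "KB_adj V E B1 C" using assms(2-5) unfolding KB_adj_def KB_vertices_def by blast
  then show ?thesis using assms(1) unfolding false_twins_def nbhd_def KB_adj_def by blast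
qed

locale anticomplete_twin_bicliques =
  fixes V :: "'a set" and E :: "'a \<Rightarrow> 'a \<Rightarrow> bool" and Bi Bj :: "'a set"
  assumes simple: "simple_graph V E"
    and biclique_i: "biclique V E Bi"
    and disjoint: "Bi \<inter> Bj = {}"
    and anticomplete: "\<forall>a\<in>Bi. \<forall>b\<in>Bj. \<not> E a b"
    and meets: "\<And>C. biclique V E C \<Longrightarrow> C \<inter> Bi \<noteq> {} \<Longrightarrow> C \<noteq> Bi \<Longrightarrow> C \<noteq> Bj \<Longrightarrow>
      C \<inter> Bj \<noteq> {}"
begin

lemma other_biclique_edge_reaches_Bj:
  assumes "biclique V E C" "C \<noteq> Bi" "x \<in> C" "x \<in> Bi" "a \<in> C" "E x a"
  obtains y where "y \<in> Bj" "E a y"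
proof -
  have "C \<noteq> Bj" "C \<inter> Bi \<noteq> {}" using assms(3,4) disjoint by blast+
  then obtain y where y: "y \<in> C" "y \<in> Bj" using meets[OF assms(1) _ assms(2)] by blast
  have "E x y \<or> E a y"
    using induced_complete_bipartite_adj_edge[OF simple biclique_induced_complete_bipartite
        assms(3,5) y(1) assms(6)] assms(1) by blast
  moreover have "\<not> E x y" using anticomplete assms(4) y(2) by blast
  ultimately show ?thesis using that y(2) by blast
qed

lemma outside_neighbour_adj_neighbour:
  assumes "v \<notin> Bi" "x \<in> Bi" "E v x" "u \<in> Bi" "E x u"
  shows "E v u"
proof (rule ccontr)
  assume "\<not> E v u"
  have "\<forall>a\<in>{v, u}. E x a" using simple_graph_sym[OF simple assms(3)] assms(5) by blast
  moreover have "\<forall>a\<in>{v, u}. \<forall>b\<in>{v, u}. \<not> E a b"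
    using \<open>\<not> E v u\<close> simple_graph_sym[OF simple, of u v] simple_graph_irrefl[OF simple] by blast
  ultimately obtain C where C: "biclique V E C" "insert x {v, u} \<subseteq> C"
    using star_extends_to_biclique[OF simple insert_not_empty] by blast
  moreover have "C \<noteq> Bi" using C(2) assms(1) by blast
  ultimately obtain y where "y \<in> Bj" "E u y"
    using other_biclique_edge_reaches_Bj[of C x u] assms(2,5) by blast
  then show False using anticomplete assms(4) by blast
qed

lemma outside_neighbour_adj_all:
  assumes "v \<notin> Bi" "x \<in> Bi" "E v x"
  shows "\<forall>w\<in>Bi. E v w"
proof
  fix w assume "w \<in> Bi"
  then consider "E x w" | u where "u \<in> Bi" "E x u" "E u w"
    using induced_complete_bipartite_dist_le_2[OF simple
        biclique_induced_complete_bipartite[OF biclique_i] assms(2)] by blast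
  then show "E v w"
  proof cases
    case 1
    then show ?thesis using outside_neighbour_adj_neighbour assms \<open>w \<in> Bi\<close> by blast
  next
    case 2
    then have "E v u" using outside_neighbour_adj_neighbour assms by blast
    then show ?thesis
      using outside_neighbour_adj_neighbour[OF assms(1) 2(1) _ \<open>w \<in> Bi\<close> 2(3)] by blast
  qed
qed

lemma outside_neighbour_adj_Bj:
  assumes "v \<notin> Bi" "x \<in> Bi" "E x v"
  obtains y where "y \<in> Bj" "E v y"
proof -
  have "\<forall>a\<in>{v}. E x a" "\<forall>a\<in>{v}. \<forall>b\<in>{v}. \<not> E a b"
    using assms(3) simple_graph_irrefl[OF simple] by blast+
  then obtain C where C: "biclique V E C" "insert x {v} \<subseteq> C"
    using star_extends_to_biclique[OF simple insert_not_empty] by blast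
  moreover have "C \<noteq> Bi" using C(2) assms(1) by blast
  ultimately show ?thesis using other_biclique_edge_reaches_Bj[of C x v] assms(2,3) that by blast
qed

end

lemma anticomplete_twin_bicliques_common_neighbour:
  assumes "connected_graph V E"
    and twins12: "anticomplete_twin_bicliques V E B1 B2"
    and twins21: "anticomplete_twin_bicliques V E B2 B1"
  shows "\<exists>v\<in>V. \<forall>x\<in>B1 \<union> B2. E v x"
proof -
  interpret T12: anticomplete_twin_bicliques V E B1 B2 by (fact twins12)
  interpret T21: anticomplete_twin_bicliques V E B2 B1 by (fact twins21)
  obtain x0 y0 where "x0 \<in> B1" "y0 \<in> B2"
    using T12.biclique_i T21.biclique_i biclique_induced_complete_bipartite
      induced_complete_bipartite_has_edge by metis
  moreover have "B1 \<union> B2 \<subseteq> V"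
    using T12.biclique_i T21.biclique_i biclique_induced_complete_bipartite
      induced_complete_bipartite_subset by blast
  ultimately have "E\<^sup>*\<^sup>* x0 y0" "y0 \<notin> B1"
    using assms(1) T12.disjoint unfolding connected_graph_def by blast+
  then obtain x v where xv: "x \<in> B1" "v \<notin> B1" "E x v"
    using rtranclp_leaves_set \<open>x0 \<in> B1\<close> by metis
  have "v \<in> V" using simple_graph_edge_in_V[OF T12.simple xv(3)] by blast
  moreover have all1: "\<forall>w\<in>B1. E v w"
    using T12.outside_neighbour_adj_all xv simple_graph_sym[OF T12.simple] by blast
  moreover obtain y where "y \<in> B2" "E v y" using T12.outside_neighbour_adj_Bj xv by blast
  moreover have "v \<notin> B2" using xv T12.anticomplete by blast
  ultimately show ?thesis using T21.outside_neighbour_adj_all by blast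
qed

lemma KB_has_K5_if_common_neighbour:
  assumes "simple_graph V E" "biclique V E B1" "biclique V E B2"
    and anticomplete: "\<forall>a\<in>B1. \<forall>b\<in>B2. \<not> E a b"
    and v: "\<forall>x\<in>B1 \<union> B2. E v x"
  shows "has_induced_K 5 (KB_vertices V E) (KB_adj V E)"
proof -
  have star: "\<exists>C. biclique V E C \<and> {v, a, b} \<subseteq> C" if "a \<in> B1" "b \<in> B2" for a b
  proof -
    have "\<not> E a b" "\<not> E b a"
      using that anticomplete simple_graph_sym[OF assms(1), of b a] by blast+
    then have "\<forall>c\<in>{a, b}. \<forall>d\<in>{a, b}. \<not> E c d" using simple_graph_irrefl[OF assms(1)] by blast
    moreover have "\<forall>c\<in>{a, b}. E v c" using that v by blast
    ultimately show ?thesis using star_extends_to_biclique[OF assms(1) insert_not_empty] by blast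
  qed
  have no_triangle: False
    if "biclique V E C" "{v, a, b} \<subseteq> C" "E a b" "a \<in> B1 \<union> B2" "b \<in> B1 \<union> B2" for C a b
    using induced_complete_bipartite_triangle_free[OF biclique_induced_complete_bipartite,
        of V E C v a b] that v by blast
  obtain x1 y1 where e1: "x1 \<in> B1" "y1 \<in> B1" "E x1 y1"
    using induced_complete_bipartite_has_edge[OF biclique_induced_complete_bipartite[OF assms(2)]]
    by blast
  obtain x2 y2 where e2: "x2 \<in> B2" "y2 \<in> B2" "E x2 y2"
    using induced_complete_bipartite_has_edge[OF biclique_induced_complete_bipartite[OF assms(3)]]
    by blast
  obtain C1 C2 C3 C4 where C: "biclique V E C1" "{v, x1, x2} \<subseteq> C1"
    "biclique V E C2" "{v, x1, y2} \<subseteq> C2" "biclique V E C3" "{v, y1, x2} \<subseteq> C3"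
    "biclique V E C4" "{v, y1, y2} \<subseteq> C4"
    using star e1 e2 by meson
  have "C1 \<noteq> C2" "C3 \<noteq> C4" using no_triangle[of C1 x2 y2] no_triangle[of C3 x2 y2] C e2 by auto
  moreover have "C1 \<noteq> C3" "C1 \<noteq> C4" "C2 \<noteq> C3" "C2 \<noteq> C4"
    using no_triangle[of C1 x1 y1] no_triangle[of C2 x1 y1] C e1 by auto
  moreover have "v \<notin> B1" using v simple_graph_irrefl[OF assms(1)] by blast
  ultimately have distinct: "distinct [B1, C1, C2, C3, C4]" using C by auto
  let ?K = "{B1, C1, C2, C3, C4}"
  have "card ?K = 5" using distinct_card[OF distinct] by simp
  moreover have "?K \<subseteq> KB_vertices V E" using assms(2) C unfolding KB_vertices_def by auto
  moreover have "\<forall>a\<in>?K. \<forall>b\<in>?K. a \<noteq> b \<longrightarrow> KB_adj V E a b"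
  proof -
    have "v \<in> C1 \<inter> C2 \<inter> C3 \<inter> C4" "x1 \<in> B1 \<inter> C1 \<inter> C2" "y1 \<in> B1 \<inter> C3 \<inter> C4"
      using C e1 by auto
    then have "\<forall>a\<in>?K. \<forall>b\<in>?K. a \<inter> b \<noteq> {}" by auto
    then show ?thesis using \<open>?K \<subseteq> KB_vertices V E\<close> unfolding KB_adj_def by blast
  qed
  moreover have "finite ?K" by simp
  ultimately show ?thesis unfolding has_induced_K_def by blast
qed

theorem lemma1:
  fixes V :: "'a set" and E :: "'a \<Rightarrow> 'a \<Rightarrow> bool" and B1 B2 :: "'a set"
  assumes "connected_graph V E"
    and "B1 \<in> KB_vertices V E" and "B2 \<in> KB_vertices V E"
    and "false_twins (KB_adj V E) B1 B2"
    and "\<forall>x\<in>B1. \<forall>y\<in>B2. \<not> E x y"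
  shows "(\<exists>v\<in>V. \<forall>x\<in>B1 \<union> B2. E v x) \<and> has_induced_K 5 (KB_vertices V E) (KB_adj V E)"
proof -
  have simple: "simple_graph V E" using assms(1) unfolding connected_graph_def by blast
  have bicliques: "biclique V E B1" "biclique V E B2"
    using assms(2,3) unfolding KB_vertices_def by auto
  have twins21: "false_twins (KB_adj V E) B2 B1"
    using assms(4) unfolding false_twins_def by auto
  have disjoint: "B1 \<inter> B2 = {}" using false_twins_KB_disjoint assms(2-4) by blast
  have anticomplete21: "\<forall>a\<in>B2. \<forall>b\<in>B1. \<not> E a b"
    using assms(5) simple_graph_sym[OF simple] by blast
  have "anticomplete_twin_bicliques V E B1 B2"
    by unfold_locales
      (use simple bicliques disjoint assms(5) false_twins_KB_meet[OF assms(4,2)] in auto)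
  moreover have "anticomplete_twin_bicliques V E B2 B1"
    by unfold_locales (use simple bicliques disjoint anticomplete21
        false_twins_KB_meet[OF twins21 assms(3)] in auto)
  ultimately obtain v where "v \<in> V" "\<forall>x\<in>B1 \<union> B2. E v x"
    using anticomplete_twin_bicliques_common_neighbour assms(1) by blast
  then show ?thesis
    using KB_has_K5_if_common_neighbour[OF simple bicliques assms(5)] by blast
qed

end
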